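(* Let $H$ be a Hermitian operator on a $d$-dimensional Hilbert space with spectral decomposition $H=\sum_{i=1}^M\lambda_i\Pi_i$, where $M\ge 2$, $\lambda_M>\cdots>\lambda_1$ are the distinct eigenvalues and $\Pi_i$ the spectral projections. Let $\Delta=\lambda_2-\lambda_1$, $d_G=\operatorname{Tr}[\Pi_1]$, and $\varepsilon>0$. If $$\beta=\frac{1}{\Delta}\ln\!\left[\left(\frac{1}{e^\varepsilon-1}\right)\left(\frac{d-d_G}{d_G}\right)\right]$$ and $\beta\ge 0$, then $$D\!\left(\frac{\Pi_1}{\operatorname{Tr}[\Pi_1]}\middle\|\frac{e^{-\beta H}}{\operatorname{Tr}[e^{-\beta H}]}\right)\le\varepsilon,$$ and the same inequality holds with $D$ replaced by $D_\alpha$, $\widetilde{D}_\alpha$, or $\widehat{D}_\alpha$ for every $\alpha\in(0,1)\cup(1,\infty)$.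
   Context: For states $\rho,\sigma$: $D(\rho\|\sigma)=\operatorname{Tr}[\rho(\ln\rho-\ln\sigma)]$ (quantum relative entropy); $D_\alpha(\rho\|\sigma)=\frac{1}{\alpha-1}\ln\operatorname{Tr}[\rho^\alpha\sigma^{1-\alpha}]$ (Petz–Rényi); $\widetilde{D}_\alpha(\rho\|\sigma)=\frac{1}{\alpha-1}\ln\operatorname{Tr}\!\left[\left(\sigma^{\frac{1-\alpha}{2\alpha}}\rho\,\sigma^{\frac{1-\alpha}{2\alpha}}\right)^\alpha\right]$ (sandwiched Rényi); $\widehat{D}_\alpha(\rho\|\sigma)=\frac{1}{\alpha-1}\ln\operatorname{Tr}\!\left[\sigma\left(\sigma^{-1/2}\rho\,\sigma^{-1/2}\right)^\alpha\right]$ (geometric Rényi). *)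

theory Defs
  imports "Jordan_Normal_Form.Schur_Decomposition"
begin

definition mat_trace :: "complex mat \<Rightarrow> complex" where
  "mat_trace A = (\<Sum>i<dim_row A. A $$ (i, i))"

definition hermitian_mat :: "complex mat \<Rightarrow> bool" where
  "hermitian_mat A \<longleftrightarrow> A \<in> carrier_mat (dim_row A) (dim_row A) \<and> mat_adjoint A = A"

definition unitary_mat :: "complex mat \<Rightarrow> bool" where
  "unitary_mat U \<longleftrightarrow> U \<in> carrier_mat (dim_row U) (dim_row U)
     \<and> U * mat_adjoint U = 1\<^sub>m (dim_row U) \<and> mat_adjoint U * U = 1\<^sub>m (dim_row U)"

definition spectral_decomp :: "complex mat \<Rightarrow> complex mat \<Rightarrow> (nat \<Rightarrow> real) \<Rightarrow> bool" where
  "spectral_decomp A U lam \<longleftrightarrow> unitary_mat U \<and> dim_row U = dim_row A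
     \<and> A = U * mat_diag (dim_row A) (\<lambda>i. complex_of_real (lam i)) * mat_adjoint U"

definition mat_fun :: "(real \<Rightarrow> real) \<Rightarrow> complex mat \<Rightarrow> complex mat" where
  "mat_fun f A = (let (U, lam) = (SOME (U, lam). spectral_decomp A U lam)
     in U * mat_diag (dim_row A) (\<lambda>i. complex_of_real (f (lam i))) * mat_adjoint U)"

definition mat_sum :: "nat \<Rightarrow> ('i \<Rightarrow> complex mat) \<Rightarrow> 'i set \<Rightarrow> complex mat" where
  "mat_sum d F I = Matrix.mat d d (\<lambda>(a, b). \<Sum>i\<in>I. F i $$ (a, b))"

text \<open>Logarithm on the support (standard convention 0 log 0 = 0; support inverse).\<close>
definition ln_supp :: "real \<Rightarrow> real" where
  "ln_supp x = (if x > 0 then ln x else 0)"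

definition rel_entropy :: "complex mat \<Rightarrow> complex mat \<Rightarrow> real" where
  "rel_entropy \<rho> \<sigma> = Re (mat_trace (\<rho> * (mat_fun ln_supp \<rho> - mat_fun ln_supp \<sigma>)))"

definition petz_renyi :: "real \<Rightarrow> complex mat \<Rightarrow> complex mat \<Rightarrow> real" where
  "petz_renyi \<alpha> \<rho> \<sigma> = 1 / (\<alpha> - 1) *
     ln (Re (mat_trace (mat_fun (\<lambda>x. x powr \<alpha>) \<rho> * mat_fun (\<lambda>x. x powr (1 - \<alpha>)) \<sigma>)))"

definition sandwiched_renyi :: "real \<Rightarrow> complex mat \<Rightarrow> complex mat \<Rightarrow> real" where
  "sandwiched_renyi \<alpha> \<rho> \<sigma> = (let S = mat_fun (\<lambda>x. x powr ((1 - \<alpha>) / (2 * \<alpha>))) \<sigma> in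
     1 / (\<alpha> - 1) * ln (Re (mat_trace (mat_fun (\<lambda>x. x powr \<alpha>) (S * \<rho> * S)))))"

definition geometric_renyi :: "real \<Rightarrow> complex mat \<Rightarrow> complex mat \<Rightarrow> real" where
  "geometric_renyi \<alpha> \<rho> \<sigma> = (let S = mat_fun (\<lambda>x. x powr (- 1 / 2)) \<sigma> in
     1 / (\<alpha> - 1) * ln (Re (mat_trace (\<sigma> * mat_fun (\<lambda>x. x powr \<alpha>) (S * \<rho> * S)))))"

end

theory Submission
  imports Defs
begin

(* Both states are functions of H = \<Sum>_j lam_j P_j, hence of the form \<Sum>_j a_j P_j, and on such
   matrices the functional calculus acts on the weights a_j alone: every divergence of two of them
   is a classical divergence of weight vectors, weighted by the ranks Tr P_j. The normalised ground
   projector has a single nonzero weight, so all four divergences equal -ln (d_G e^{-\<beta> lam_1} / Z),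
   minus the logarithm of the Gibbs weight of the ground space. Bounding the partition function by
   Z \<le> d_G e^{-\<beta> lam_1} + (d - d_G) e^{-\<beta> lam_2}, the choice of \<beta> makes the right-hand side
   exactly d_G e^{-\<beta> lam_1} e^\<epsilon>. *)

section \<open>Spectral theorem for Hermitian matrices\<close>

lemma mat_adjoint_dim [simp]:
  "dim_row (mat_adjoint A) = dim_col A" "dim_col (mat_adjoint A) = dim_row A"
  unfolding mat_adjoint_def by (auto simp: mat_of_rows_def)

lemma index_mat_adjoint [simp]:
  "i < dim_col A \<Longrightarrow> j < dim_row A \<Longrightarrow> mat_adjoint A $$ (i, j) = cnj (A $$ (j, i))"
  unfolding mat_adjoint_def by (auto simp: mat_of_rows_def conjugate_complex_def)

lemma mat_adjoint_carrier [simp]: "A \<in> carrier_mat n m \<Longrightarrow> mat_adjoint A \<in> carrier_mat m n"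
  unfolding carrier_mat_def by simp

lemma mat_adjoint_adjoint [simp]: "mat_adjoint (mat_adjoint (A :: complex mat)) = A"
  by (rule eq_matI) simp_all

lemma mat_adjoint_mult:
  fixes A B :: "complex mat"
  assumes "A \<in> carrier_mat n m" "B \<in> carrier_mat m k"
  shows "mat_adjoint (A * B) = mat_adjoint B * mat_adjoint A"
proof (rule eq_matI)
  fix i j assume "i < dim_row (mat_adjoint B * mat_adjoint A)" "j < dim_col (mat_adjoint B * mat_adjoint A)"
  then show "mat_adjoint (A * B) $$ (i, j) = (mat_adjoint B * mat_adjoint A) $$ (i, j)"
    using assms by (simp add: scalar_prod_def atLeast0LessThan mult.commute)
qed (use assms in auto)

lemma mat_adjoint_sandwich:
  fixes A U :: "complex mat"
  assumes A: "A \<in> carrier_mat n n" and U: "U \<in> carrier_mat n m"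
  shows "mat_adjoint (mat_adjoint U * A * U) = mat_adjoint U * mat_adjoint A * U"
proof -
  have "mat_adjoint (mat_adjoint U * A * U) = mat_adjoint U * mat_adjoint (mat_adjoint U * A)"
    using A U by (intro mat_adjoint_mult[of _ m n _ m]) auto
  also have "mat_adjoint (mat_adjoint U * A) = mat_adjoint A * U"
    using A U by (simp add: mat_adjoint_mult[of "mat_adjoint U" m n A n])
  finally show ?thesis
    using A U by (simp add: assoc_mult_mat[of _ m n _ n _ m])
qed

lemma mat_adjoint_one [simp]: "mat_adjoint (1\<^sub>m n :: complex mat) = 1\<^sub>m n"
  by (rule eq_matI) simp_all

lemma dim_mat_diag [simp]: "dim_row (mat_diag n f) = n" "dim_col (mat_diag n f) = n"
  unfolding mat_diag_def by simp_all

lemma unitary_matI: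
  assumes "U \<in> carrier_mat n n" "mat_adjoint U * U = 1\<^sub>m n"
  shows "unitary_mat (U :: complex mat)"
proof -
  have "U * mat_adjoint U = 1\<^sub>m n"
    by (rule mat_mult_left_right_inverse[of _ n]) (use assms in auto)
  then show ?thesis
    using assms unfolding unitary_mat_def by auto
qed

lemma unitary_matD:
  assumes "unitary_mat U" "dim_row U = n"
  shows "U \<in> carrier_mat n n" "mat_adjoint U * U = 1\<^sub>m n" "U * mat_adjoint U = 1\<^sub>m n"
  using assms unfolding unitary_mat_def by auto

lemma unitary_mat_mult:
  assumes U: "unitary_mat U" "U \<in> carrier_mat n n" and V: "unitary_mat V" "V \<in> carrier_mat n n"
  shows "unitary_mat (U * V)"
proof -
  note u = unitary_matD[OF U(1)] and v = unitary_matD[OF V(1)]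
  have "mat_adjoint (U * V) * (U * V) = mat_adjoint V * (mat_adjoint U * (U * V))"
    using U V by (simp add: mat_adjoint_mult[of U n n V n] assoc_mult_mat[of _ n n _ n _ n])
  also have "mat_adjoint U * (U * V) = V"
    using U V u by (simp flip: assoc_mult_mat[of _ n n _ n _ n])
  also have "mat_adjoint V * V = 1\<^sub>m n"
    using V v by simp
  finally show ?thesis
    using U V by (intro unitary_matI[of _ n]) auto
qed

lemma cscalar_prod_self:
  assumes "w \<in> carrier_vec n"
  shows "w \<bullet>c w = complex_of_real (\<Sum>k<n. (cmod (w $ k))\<^sup>2)"
proof -
  have "w \<bullet>c w = (\<Sum>k<n. w $ k * cnj (w $ k))"
    using assms by (simp add: scalar_prod_def atLeast0LessThan)
  also have "\<dots> = (\<Sum>k<n. complex_of_real ((cmod (w $ k))\<^sup>2))"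
    by (simp only: complex_norm_square)
  finally show ?thesis
    by (simp only: of_real_sum)
qed

lemma unitary_mat_normalized_cols:
  fixes ws :: "complex vec list"
  assumes ws: "set ws \<subseteq> carrier_vec n" "corthogonal ws" "length ws = n"
  defines "U \<equiv> mat n n (\<lambda>(k, j). complex_of_real (1 / sqrt (\<Sum>l<n. (cmod (ws ! j $ l))\<^sup>2)) * ws ! j $ k)"
  shows "unitary_mat U"
proof -
  define c where "c j = 1 / sqrt (\<Sum>l<n. (cmod (ws ! j $ l))\<^sup>2)" for j
  have wsc: "ws ! j \<in> carrier_vec n" if "j < n" for j
    using ws that by auto
  have c_sq: "complex_of_real (c j * c j) * (ws ! j \<bullet>c ws ! j) = 1" if j: "j < n" for j
  proof -
    have "ws ! j \<bullet>c ws ! j \<noteq> 0"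
      using corthogonalD[OF ws(2)] ws(3) j by auto
    then have "(\<Sum>l<n. (cmod (ws ! j $ l))\<^sup>2) \<noteq> 0"
      unfolding cscalar_prod_self[OF wsc[OF j]] by (metis of_real_0)
    moreover have "(\<Sum>l<n. (cmod (ws ! j $ l))\<^sup>2) \<ge> 0"
      by (intro sum_nonneg) auto
    ultimately have "(\<Sum>l<n. (cmod (ws ! j $ l))\<^sup>2) > 0"
      by linarith
    then have "c j * c j * (\<Sum>l<n. (cmod (ws ! j $ l))\<^sup>2) = 1"
      unfolding c_def by (simp add: field_simps)
    then show ?thesis
      unfolding cscalar_prod_self[OF wsc[OF j]] by (metis of_real_1 of_real_mult)
  qed
  have "mat_adjoint U * U = 1\<^sub>m n"
  proof (rule eq_matI)
    fix i j assume "i < dim_row (1\<^sub>m n :: complex mat)" "j < dim_col (1\<^sub>m n :: complex mat)"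
    then have ij: "i < n" "j < n" by auto
    have "(mat_adjoint U * U) $$ (i, j) = complex_of_real (c i * c j) * (ws ! j \<bullet>c ws ! i)"
      using ij wsc[OF ij(1)] wsc[OF ij(2)]
      by (simp add: U_def c_def[symmetric] scalar_prod_def atLeast0LessThan sum_distrib_left algebra_simps)
    also have "\<dots> = 1\<^sub>m n $$ (i, j)"
      using c_sq[of i] ij corthogonalD[OF ws(2)] ws(3) by (cases "i = j") auto
    finally show "(mat_adjoint U * U) $$ (i, j) = 1\<^sub>m n $$ (i, j)" .
  qed (auto simp: U_def)
  then show ?thesis
    by (intro unitary_matI[of _ n]) (auto simp: U_def)
qed

lemma unitary_mat_eigenvector_first_col:
  fixes A :: "complex mat"
  assumes A: "A \<in> carrier_mat n n" and e: "eigenvalue A e"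
  obtains U where "unitary_mat U" "U \<in> carrier_mat n n" "A *\<^sub>v col U 0 = e \<cdot>\<^sub>v col U 0"
proof -
  define v where "v = find_eigenvector A e"
  have "eigenvector A v e"
    unfolding v_def by (rule find_eigenvector[OF A e])
  then have v: "v \<in> carrier_vec n" "v \<noteq> 0\<^sub>v n" and Av: "A *\<^sub>v v = e \<cdot>\<^sub>v v"
    using A unfolding eigenvector_def by auto
  then have n: "0 < n"
    by (cases n) auto
  interpret cof_vec_space n "TYPE(complex)" .
  define b where "b = basis_completion v"
  define ws where "ws = gram_schmidt n b"
  from basis_completion[OF v, folded b_def]
  have b: "distinct b" "\<not> lin_dep (set b)" "set b \<subseteq> carrier_vec n" "hd b = v" "length b = n"
    by auto
  then obtain vs where bv: "b = v # vs"
    using n by (cases b) auto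
  from gram_schmidt_result[OF b(3,1,2) refl, folded ws_def]
  have ws: "set ws \<subseteq> carrier_vec n" "corthogonal ws" "length ws = n"
    by (auto simp: b(5))
  have ws0: "ws ! 0 = v"
    using gram_schmidt_hd[OF v(1), of vs, folded bv ws_def] ws(3) n by (cases ws) auto
  define U where "U = mat n n (\<lambda>(k, j). complex_of_real (1 / sqrt (\<Sum>l<n. (cmod (ws ! j $ l))\<^sup>2)) * ws ! j $ k)"
  have colU: "col U 0 = complex_of_real (1 / sqrt (\<Sum>l<n. (cmod (v $ l))\<^sup>2)) \<cdot>\<^sub>v v"
    using v n ws0 by (intro eq_vecI) (auto simp: U_def)
  show ?thesis
  proof
    show "unitary_mat U"
      unfolding U_def by (rule unitary_mat_normalized_cols[OF ws])
    show "A *\<^sub>v col U 0 = e \<cdot>\<^sub>v col U 0"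
      unfolding colU using A v Av by (simp add: mult_mat_vec smult_smult_assoc mult.commute)
  qed (simp add: U_def)
qed

lemma complex_mat_eigenvalue_exists:
  fixes A :: "complex mat"
  assumes A: "A \<in> carrier_mat (Suc m) (Suc m)"
  obtains e where "eigenvalue A e"
proof -
  obtain es where es: "char_poly A = (\<Prod>a\<leftarrow>es. [:- a, 1:])" "length es = Suc m"
    using char_poly_factorized[OF A] by blast
  then obtain e es' where "es = e # es'"
    by (cases es) auto
  then have "poly (char_poly A) e = 0"
    unfolding es(1) by simp
  then show ?thesis
    using that eigenvalue_root_char_poly[OF A] by blast
qed

lemma unitary_conj_eigenvector_col:
  fixes A U :: "complex mat"
  assumes U: "unitary_mat U" "U \<in> carrier_mat n n" and A: "A \<in> carrier_mat n n"
    and ev: "A *\<^sub>v col U 0 = e \<cdot>\<^sub>v col U 0" and i: "i < n"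
  shows "(mat_adjoint U * A * U) $$ (i, 0) = (if i = 0 then e else 0)"
proof -
  have n: "0 < n"
    using i by simp
  have "col (A * U) 0 = A *\<^sub>v col U 0"
    by (rule col_mult2[OF A U(2) n])
  then have "(mat_adjoint U * A * U) $$ (i, 0) = row (mat_adjoint U) i \<bullet> (A *\<^sub>v col U 0)"
    using U A i n by (simp add: assoc_mult_mat[of _ n n _ n _ n])
  also have "\<dots> = e * (mat_adjoint U * U) $$ (i, 0)"
    unfolding ev using U i n by simp
  also have "\<dots> = (if i = 0 then e else 0)"
    using unitary_matD(2)[OF U(1)] U(2) i n by simp
  finally show ?thesis .
qed

lemma hermitian_deflate:
  fixes A :: "complex mat"
  assumes A: "A \<in> carrier_mat (Suc m) (Suc m)" "mat_adjoint A = A"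
    and col0: "\<And>i. i < Suc m \<Longrightarrow> A $$ (i, 0) = (if i = 0 then e else 0)"
  obtains B where "B \<in> carrier_mat m m" "mat_adjoint B = B"
    "A = four_block_mat (mat_diag 1 (\<lambda>_. complex_of_real (Re e))) (0\<^sub>m 1 m) (0\<^sub>m m 1) B"
proof
  define B where "B = mat m m (\<lambda>(i, j). A $$ (Suc i, Suc j))"
  have sym: "A $$ (i, j) = cnj (A $$ (j, i))" if "i < Suc m" "j < Suc m" for i j
    using index_mat_adjoint[of i A j] A that by simp
  have "e = cnj e"
    using sym[of 0 0] col0[of 0] by simp
  then have e: "complex_of_real (Re e) = e"
    by (metis Reals_cnj_iff complex_is_Real_iff of_real_Re)
  show "B \<in> carrier_mat m m"
    by (simp add: B_def)
  show "mat_adjoint B = B"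
  proof (rule eq_matI)
    fix i j assume "i < dim_row B" "j < dim_col B"
    then show "mat_adjoint B $$ (i, j) = B $$ (i, j)"
      using sym[of "Suc j" "Suc i"] by (simp add: B_def)
  qed (simp_all add: B_def)
  show "A = four_block_mat (mat_diag 1 (\<lambda>_. complex_of_real (Re e))) (0\<^sub>m 1 m) (0\<^sub>m m 1) B"
  proof (rule eq_matI)
    fix i j assume "i < dim_row (four_block_mat (mat_diag 1 (\<lambda>_. complex_of_real (Re e))) (0\<^sub>m 1 m) (0\<^sub>m m 1) B)"
      "j < dim_col (four_block_mat (mat_diag 1 (\<lambda>_. complex_of_real (Re e))) (0\<^sub>m 1 m) (0\<^sub>m m 1) B)"
    then have ij: "i < Suc m" "j < Suc m"
      by (auto simp: B_def)
    show "A $$ (i, j) = four_block_mat (mat_diag 1 (\<lambda>_. complex_of_real (Re e))) (0\<^sub>m 1 m) (0\<^sub>m m 1) B $$ (i, j)"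
      using ij col0 sym[of 0 j] col0[of j] e by (cases i; cases j) (auto simp: mat_diag_def B_def)
  qed (use A in \<open>auto simp: B_def\<close>)
qed

lemma spectral_decomp_four_block:
  assumes sd: "spectral_decomp B V l" and B: "B \<in> carrier_mat m m"
  shows "spectral_decomp (four_block_mat (mat_diag 1 (\<lambda>_. complex_of_real x)) (0\<^sub>m 1 m) (0\<^sub>m m 1) B)
           (four_block_mat (1\<^sub>m 1) (0\<^sub>m 1 m) (0\<^sub>m m 1) V) (case_nat x l)"
proof -
  have V: "V \<in> carrier_mat m m" "mat_adjoint V * V = 1\<^sub>m m"
    and B_eq: "B = V * mat_diag m (\<lambda>i. complex_of_real (l i)) * mat_adjoint V"
    using sd B unitary_matD[of V m] unfolding spectral_decomp_def by auto
  define W where "W = four_block_mat (1\<^sub>m 1) (0\<^sub>m 1 m) (0\<^sub>m m 1) V"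
  define D where "D = mat_diag m (\<lambda>i. complex_of_real (l i))"
  have W: "W \<in> carrier_mat (Suc m) (Suc m)"
    unfolding W_def using V by auto
  have W_adj: "mat_adjoint W = four_block_mat (1\<^sub>m 1) (0\<^sub>m 1 m) (0\<^sub>m m 1) (mat_adjoint V)"
    by (rule eq_matI) (use V in \<open>auto simp: W_def\<close>)
  have "mat_adjoint W * W = 1\<^sub>m (Suc m)"
    unfolding W_adj unfolding W_def
    by (subst mult_four_block_mat[of _ 1 1 _ m _ m _ _ 1 _ m]) (use V in auto)
  then have "unitary_mat W"
    using W by (rule unitary_matI[rotated])
  have diag: "mat_diag (Suc m) (\<lambda>i. complex_of_real (case_nat x l i)) =
      four_block_mat (mat_diag 1 (\<lambda>_. complex_of_real x)) (0\<^sub>m 1 m) (0\<^sub>m m 1) D"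
    by (rule eq_matI) (auto simp: D_def mat_diag_def split: nat.split)
  have "W * mat_diag (Suc m) (\<lambda>i. complex_of_real (case_nat x l i)) =
      four_block_mat (mat_diag 1 (\<lambda>_. complex_of_real x)) (0\<^sub>m 1 m) (0\<^sub>m m 1) (V * D)"
    unfolding diag unfolding W_def
    by (subst mult_four_block_mat[of _ 1 1 _ m _ m _ _ 1 _ m]) (use V in \<open>auto simp: D_def\<close>)
  also have "\<dots> * mat_adjoint W =
      four_block_mat (mat_diag 1 (\<lambda>_. complex_of_real x)) (0\<^sub>m 1 m) (0\<^sub>m m 1) B"
    unfolding W_adj B_eq D_def[symmetric]
    by (subst mult_four_block_mat[of _ 1 1 _ m _ m _ _ 1 _ m]) (use V in \<open>auto simp: D_def\<close>)
  finally show ?thesis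
    unfolding spectral_decomp_def W_def[symmetric] using \<open>unitary_mat W\<close> W B by auto
qed

lemma spectral_decomp_unitary_conj:
  assumes sd: "spectral_decomp B V l" and B: "B \<in> carrier_mat n n"
    and W: "unitary_mat W" "W \<in> carrier_mat n n"
  shows "spectral_decomp (W * B * mat_adjoint W) (W * V) l"
proof -
  have V: "unitary_mat V" "V \<in> carrier_mat n n"
    and B_eq: "B = V * mat_diag n (\<lambda>i. complex_of_real (l i)) * mat_adjoint V"
    using sd B unitary_matD[of V n] unfolding spectral_decomp_def by auto
  have "W * B * mat_adjoint W = (W * V) * mat_diag n (\<lambda>i. complex_of_real (l i)) * mat_adjoint (W * V)"
    unfolding B_eq using V W
    by (simp add: mat_adjoint_mult[of W n n V n] assoc_mult_mat[of _ n n _ n _ n] mult_carrier_mat[of _ n n _ n])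
  then show ?thesis
    unfolding spectral_decomp_def using unitary_mat_mult[OF W V] V W by simp
qed

(* Deflation: conjugating by a unitary whose first column is an eigenvector splits off a 1x1 block. *)
theorem hermitian_spectral_decomp_exists:
  fixes A :: "complex mat"
  assumes "A \<in> carrier_mat n n" "mat_adjoint A = A"
  shows "\<exists>U lam. spectral_decomp A U lam"
  using assms
proof (induction n arbitrary: A)
  case 0
  then have "A = 1\<^sub>m 0 * mat_diag 0 (\<lambda>_. complex_of_real 0) * mat_adjoint (1\<^sub>m 0)"
    by (intro eq_matI) auto
  then have "spectral_decomp A (1\<^sub>m 0) (\<lambda>_. 0)"
    using 0 unfolding spectral_decomp_def unitary_mat_def by simp
  then show ?case by blast
next
  case (Suc m)
  note A = Suc.prems
  obtain e where "eigenvalue A e"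
    using complex_mat_eigenvalue_exists[OF A(1)] .
  then obtain U where U: "unitary_mat U" "U \<in> carrier_mat (Suc m) (Suc m)"
    and ev: "A *\<^sub>v col U 0 = e \<cdot>\<^sub>v col U 0"
    using unitary_mat_eigenvector_first_col[OF A(1)] by blast
  define A' where "A' = mat_adjoint U * A * U"
  have A': "A' \<in> carrier_mat (Suc m) (Suc m)" "mat_adjoint A' = A'"
    unfolding A'_def mat_adjoint_sandwich[OF A(1) U(2)] A(2)
    using U A by (simp_all add: mult_carrier_mat[of _ "Suc m" "Suc m" _ "Suc m"])
  have col0: "\<And>i. i < Suc m \<Longrightarrow> A' $$ (i, 0) = (if i = 0 then e else 0)"
    unfolding A'_def by (rule unitary_conj_eigenvector_col[OF U A(1) ev])
  obtain B where B: "B \<in> carrier_mat m m" "mat_adjoint B = B"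
    and A'_eq: "A' = four_block_mat (mat_diag 1 (\<lambda>_. complex_of_real (Re e))) (0\<^sub>m 1 m) (0\<^sub>m m 1) B"
    using hermitian_deflate[OF A' col0] .
  obtain V l where "spectral_decomp B V l"
    using Suc.IH[OF B] by blast
  from spectral_decomp_four_block[OF this B(1), of "Re e", folded A'_eq]
  have "spectral_decomp (U * A' * mat_adjoint U) (U * four_block_mat (1\<^sub>m 1) (0\<^sub>m 1 m) (0\<^sub>m m 1) V) (case_nat (Re e) l)"
    by (rule spectral_decomp_unitary_conj[OF _ A'(1) U])
  moreover have "U * A' * mat_adjoint U = (U * mat_adjoint U) * A * (U * mat_adjoint U)"
    unfolding A'_def using U A
    by (simp add: assoc_mult_mat[of _ "Suc m" "Suc m" _ "Suc m" _ "Suc m"] mult_carrier_mat[of _ "Suc m" "Suc m" _ "Suc m"])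
  then have "U * A' * mat_adjoint U = A"
    using unitary_matD(3)[OF U(1)] U A by simp
  ultimately show ?case
    by auto
qed

section \<open>Functional calculus on a resolution of the identity\<close>

lemma mat_sum_carrier [simp]: "mat_sum d F J \<in> carrier_mat d d"
  unfolding mat_sum_def by simp

lemma dim_mat_sum [simp]: "dim_row (mat_sum d F J) = d" "dim_col (mat_sum d F J) = d"
  unfolding mat_sum_def by simp_all

lemma index_mat_sum [simp]: "x < d \<Longrightarrow> y < d \<Longrightarrow> mat_sum d F J $$ (x, y) = (\<Sum>j\<in>J. F j $$ (x, y))"
  unfolding mat_sum_def by simp

lemma index_mat_sum_mult:
  assumes "\<And>j. j \<in> J \<Longrightarrow> F j \<in> carrier_mat d d" "V \<in> carrier_mat d d" "x < d" "k < d"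
  shows "(mat_sum d F J * V) $$ (x, k) = (\<Sum>j\<in>J. (F j * V) $$ (x, k))"
proof -
  have "(mat_sum d F J * V) $$ (x, k) = (\<Sum>l<d. (\<Sum>j\<in>J. F j $$ (x, l)) * V $$ (l, k))"
    using assms by (simp add: scalar_prod_def atLeast0LessThan)
  also have "\<dots> = (\<Sum>j\<in>J. \<Sum>l<d. F j $$ (x, l) * V $$ (l, k))"
    by (simp add: sum_distrib_right sum.swap[of _ J])
  also have "\<dots> = (\<Sum>j\<in>J. (F j * V) $$ (x, k))"
  proof (intro sum.cong refl)
    fix j assume "j \<in> J"
    then have "F j \<in> carrier_mat d d"
      using assms by auto
    then show "(\<Sum>l<d. F j $$ (x, l) * V $$ (l, k)) = (F j * V) $$ (x, k)"
      using assms by (simp add: scalar_prod_def atLeast0LessThan)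
  qed
  finally show ?thesis .
qed

lemma mat_trace_projection:
  assumes P: "P \<in> carrier_mat d d" "mat_adjoint P = P" "P * P = P"
  shows "mat_trace P = complex_of_real (\<Sum>x<d. \<Sum>l<d. (cmod (P $$ (x, l)))\<^sup>2)"
proof -
  have "mat_trace P = (\<Sum>x<d. (P * mat_adjoint P) $$ (x, x))"
    unfolding mat_trace_def using P by simp
  also have "\<dots> = (\<Sum>x<d. \<Sum>l<d. P $$ (x, l) * cnj (P $$ (x, l)))"
    using P(1) by (intro sum.cong refl) (simp add: scalar_prod_def atLeast0LessThan)
  also have "\<dots> = (\<Sum>x<d. \<Sum>l<d. complex_of_real ((cmod (P $$ (x, l)))\<^sup>2))"
    by (simp only: complex_norm_square)
  finally show ?thesis
    by (simp only: of_real_sum)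
qed

lemma sum_cmod_sq_entries_pos:
  assumes P: "P \<in> carrier_mat d d" "P \<noteq> 0\<^sub>m d d"
  shows "(\<Sum>x<d. \<Sum>l<d. (cmod (P $$ (x, l)))\<^sup>2) > 0"
proof -
  obtain x l where xl: "x < d" "l < d" "P $$ (x, l) \<noteq> 0"
  proof (rule ccontr)
    assume "\<not> thesis"
    with that have "\<And>x l. x < d \<Longrightarrow> l < d \<Longrightarrow> P $$ (x, l) = 0"
      by blast
    then have "P = 0\<^sub>m d d"
      using P(1) by (intro eq_matI) auto
    with P(2) show False
      by simp
  qed
  have "(\<Sum>l<d. (cmod (P $$ (x, l)))\<^sup>2) > 0"
    by (rule sum_pos2[of _ l]) (use xl in auto)
  then show ?thesis
    using sum_pos2[of "{..<d}" x "\<lambda>x. \<Sum>l<d. (cmod (P $$ (x, l)))\<^sup>2"] xl by (simp add: sum_nonneg)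
qed

lemma sum_eq_single:
  assumes "finite A" "i \<in> A" "\<And>j. j \<in> A \<Longrightarrow> j \<noteq> i \<Longrightarrow> f j = 0"
  shows "sum f A = f i"
  using assms by (simp add: sum.remove sum.neutral)

lemma renyi_exponent_cancel:
  fixes \<alpha> y :: real
  assumes "\<alpha> \<noteq> 1"
  shows "1 / (\<alpha> - 1) * ((1 - \<alpha>) * y) = - y"
  using assms by (simp add: field_simps)

locale resolution_of_identity =
  fixes d :: nat and J :: "nat set" and P :: "nat \<Rightarrow> complex mat"
  assumes finite_index: "finite J"
    and proj_carrier: "j \<in> J \<Longrightarrow> P j \<in> carrier_mat d d"
    and proj_hermitian: "j \<in> J \<Longrightarrow> mat_adjoint (P j) = P j"
    and proj_idem: "j \<in> J \<Longrightarrow> P j * P j = P j"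
    and proj_nonzero: "j \<in> J \<Longrightarrow> P j \<noteq> 0\<^sub>m d d"
    and proj_orth: "i \<in> J \<Longrightarrow> j \<in> J \<Longrightarrow> i \<noteq> j \<Longrightarrow> P i * P j = 0\<^sub>m d d"
    and proj_sum_one: "mat_sum d P J = 1\<^sub>m d"
begin

definition proj_comb :: "(nat \<Rightarrow> real) \<Rightarrow> complex mat" where
  "proj_comb a = mat_sum d (\<lambda>j. complex_of_real (a j) \<cdot>\<^sub>m P j) J"

lemma proj_comb_carrier [simp]: "proj_comb a \<in> carrier_mat d d"
  and dim_proj_comb [simp]: "dim_row (proj_comb a) = d" "dim_col (proj_comb a) = d"
  unfolding proj_comb_def by simp_all

lemma index_proj_comb:
  "x < d \<Longrightarrow> y < d \<Longrightarrow> proj_comb a $$ (x, y) = (\<Sum>j\<in>J. complex_of_real (a j) * P j $$ (x, y))"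
  unfolding proj_comb_def
proof (simp, intro sum.cong refl)
  fix j assume "x < d" "y < d" "j \<in> J"
  then show "(complex_of_real (a j) \<cdot>\<^sub>m P j) $$ (x, y) = complex_of_real (a j) * P j $$ (x, y)"
    using proj_carrier[of j] by simp
qed

lemma proj_mult_proj_comb:
  assumes i: "i \<in> J"
  shows "P i * proj_comb a = complex_of_real (a i) \<cdot>\<^sub>m P i"
proof (rule eq_matI)
  fix x y assume "x < dim_row (complex_of_real (a i) \<cdot>\<^sub>m P i)" "y < dim_col (complex_of_real (a i) \<cdot>\<^sub>m P i)"
  then have xy: "x < d" "y < d"
    using proj_carrier[OF i] by auto
  have "(P i * proj_comb a) $$ (x, y) = (\<Sum>l<d. P i $$ (x, l) * (\<Sum>j\<in>J. complex_of_real (a j) * P j $$ (l, y)))"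
    using xy proj_carrier[OF i] by (simp add: scalar_prod_def atLeast0LessThan index_proj_comb)
  also have "\<dots> = (\<Sum>j\<in>J. \<Sum>l<d. complex_of_real (a j) * (P i $$ (x, l) * P j $$ (l, y)))"
    by (simp add: sum_distrib_left sum.swap[of _ J] algebra_simps)
  also have "\<dots> = (\<Sum>j\<in>J. complex_of_real (a j) * (P i * P j) $$ (x, y))"
  proof (intro sum.cong refl)
    fix j assume "j \<in> J"
    then have "P j \<in> carrier_mat d d"
      by (rule proj_carrier)
    then show "(\<Sum>l<d. complex_of_real (a j) * (P i $$ (x, l) * P j $$ (l, y))) = complex_of_real (a j) * (P i * P j) $$ (x, y)"
      using xy proj_carrier[OF i] by (simp add: scalar_prod_def atLeast0LessThan sum_distrib_left)
  qed
  also have "\<dots> = (\<Sum>j\<in>J. if j = i then complex_of_real (a i) * P i $$ (x, y) else 0)"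
    using xy proj_idem proj_orth i by (intro sum.cong refl) auto
  also have "\<dots> = (complex_of_real (a i) \<cdot>\<^sub>m P i) $$ (x, y)"
    using xy proj_carrier[OF i] i finite_index by simp
  finally show "(P i * proj_comb a) $$ (x, y) = (complex_of_real (a i) \<cdot>\<^sub>m P i) $$ (x, y)" .
qed (use proj_carrier[OF i] in auto)

lemma proj_comb_mult: "proj_comb a * proj_comb b = proj_comb (\<lambda>j. a j * b j)"
proof (rule eq_matI)
  fix x y assume "x < dim_row (proj_comb (\<lambda>j. a j * b j))" "y < dim_col (proj_comb (\<lambda>j. a j * b j))"
  then have xy: "x < d" "y < d" by auto
  have "(proj_comb a * proj_comb b) $$ (x, y) = (\<Sum>j\<in>J. ((complex_of_real (a j) \<cdot>\<^sub>m P j) * proj_comb b) $$ (x, y))"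
    unfolding proj_comb_def[of a] by (rule index_mat_sum_mult) (use proj_carrier xy in auto)
  also have "\<dots> = (\<Sum>j\<in>J. complex_of_real (a j * b j) * P j $$ (x, y))"
  proof (intro sum.cong refl)
    fix j assume j: "j \<in> J"
    have "(complex_of_real (a j) \<cdot>\<^sub>m P j) * proj_comb b = complex_of_real (a j) \<cdot>\<^sub>m (P j * proj_comb b)"
      by (rule mult_smult_assoc_mat[OF proj_carrier[OF j] proj_comb_carrier])
    also have "\<dots> = complex_of_real (a j) \<cdot>\<^sub>m (complex_of_real (b j) \<cdot>\<^sub>m P j)"
      by (simp add: proj_mult_proj_comb[OF j])
    finally show "((complex_of_real (a j) \<cdot>\<^sub>m P j) * proj_comb b) $$ (x, y) = complex_of_real (a j * b j) * P j $$ (x, y)"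
      using xy proj_carrier[OF j] by simp
  qed
  also have "\<dots> = proj_comb (\<lambda>j. a j * b j) $$ (x, y)"
    using xy by (simp add: index_proj_comb)
  finally show "(proj_comb a * proj_comb b) $$ (x, y) = proj_comb (\<lambda>j. a j * b j) $$ (x, y)" .
qed auto

lemma smult_proj_comb: "complex_of_real c \<cdot>\<^sub>m proj_comb a = proj_comb (\<lambda>j. c * a j)"
  by (rule eq_matI) (auto simp: index_proj_comb sum_distrib_left algebra_simps)

lemma proj_comb_minus: "proj_comb a - proj_comb b = proj_comb (\<lambda>j. a j - b j)"
  by (rule eq_matI) (auto simp: index_proj_comb sum_subtractf algebra_simps)

lemma proj_comb_one: "proj_comb (\<lambda>_. 1) = 1\<^sub>m d"
  unfolding proj_sum_one[symmetric] by (rule eq_matI) (auto simp: index_proj_comb)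

lemma proj_comb_hermitian: "mat_adjoint (proj_comb a) = proj_comb a"
proof (rule eq_matI)
  fix x y assume "x < dim_row (proj_comb a)" "y < dim_col (proj_comb a)"
  then have xy: "x < d" "y < d" by auto
  have "cnj (P j $$ (y, x)) = P j $$ (x, y)" if "j \<in> J" for j
    using index_mat_adjoint[of x "P j" y] proj_carrier[OF that] proj_hermitian[OF that] xy by simp
  then show "mat_adjoint (proj_comb a) $$ (x, y) = proj_comb a $$ (x, y)"
    using xy by (simp add: index_proj_comb)
qed auto

lemma mat_trace_proj_comb: "mat_trace (proj_comb a) = (\<Sum>j\<in>J. complex_of_real (a j) * mat_trace (P j))"
proof -
  have "mat_trace (proj_comb a) = (\<Sum>j\<in>J. complex_of_real (a j) * (\<Sum>x<d. P j $$ (x, x)))"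
    unfolding mat_trace_def by (simp add: index_proj_comb sum.swap[of _ J] sum_distrib_left)
  then show ?thesis
    unfolding mat_trace_def using proj_carrier by (auto intro: sum.cong)
qed

lemma proj_mult_eigenvector_entry:
  assumes sd: "spectral_decomp (proj_comb mu) V nu" and j: "j \<in> J" and xk: "x < d" "k < d"
    and nz: "(P j * V) $$ (x, k) \<noteq> 0"
  shows "mu j = nu k"
proof -
  define D where "D = mat_diag d (\<lambda>i. complex_of_real (nu i))"
  have V: "V \<in> carrier_mat d d" "mat_adjoint V * V = 1\<^sub>m d"
    and S_eq: "proj_comb mu = V * D * mat_adjoint V"
    using sd unitary_matD[of V d] unfolding spectral_decomp_def D_def by auto
  have D: "D \<in> carrier_mat d d"
    by (simp add: D_def)
  have "proj_comb mu * V = V * D * (mat_adjoint V * V)"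
    unfolding S_eq using V D by (simp add: assoc_mult_mat[of _ d d _ d _ d])
  then have SV: "proj_comb mu * V = V * D"
    using V D by simp
  have "complex_of_real (mu j) \<cdot>\<^sub>m (P j * V) = P j * proj_comb mu * V"
    using proj_carrier[OF j] V by (simp add: proj_mult_proj_comb[OF j] mult_smult_assoc_mat)
  also have "\<dots> = P j * V * D"
    using proj_carrier[OF j] V D by (simp add: SV assoc_mult_mat[of _ d d _ d _ d])
  also have "\<dots> = mat d d (\<lambda>(i, k). (P j * V) $$ (i, k) * complex_of_real (nu k))"
    unfolding D_def by (rule mat_diag_mult_right) (use proj_carrier[OF j] V in auto)
  finally have "(complex_of_real (mu j) \<cdot>\<^sub>m (P j * V)) $$ (x, k) = (P j * V) $$ (x, k) * complex_of_real (nu k)"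
    using xk by simp
  then have "complex_of_real (mu j) * (P j * V) $$ (x, k) = complex_of_real (nu k) * (P j * V) $$ (x, k)"
    using proj_carrier[OF j] V xk by (simp add: mult.commute)
  then show ?thesis
    using nz by simp
qed

(* mat_fun picks its spectral decomposition with SOME; for the matrices proj_comb the choice is irrelevant. *)
lemma spectral_decomp_proj_comb_fun:
  assumes sd: "spectral_decomp (proj_comb mu) V nu"
  shows "V * mat_diag d (\<lambda>i. complex_of_real (f (nu i))) * mat_adjoint V = proj_comb (\<lambda>j. f (mu j))"
proof -
  have V: "V \<in> carrier_mat d d" "V * mat_adjoint V = 1\<^sub>m d"
    using sd unitary_matD[of V d] unfolding spectral_decomp_def by auto
  have SV: "proj_comb (\<lambda>j. f (mu j)) * V = V * mat_diag d (\<lambda>i. complex_of_real (f (nu i)))"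
  proof (rule eq_matI)
    fix x k assume "x < dim_row (V * mat_diag d (\<lambda>i. complex_of_real (f (nu i))))"
      "k < dim_col (V * mat_diag d (\<lambda>i. complex_of_real (f (nu i))))"
    then have xk: "x < d" "k < d"
      using V by auto
    have "(proj_comb (\<lambda>j. f (mu j)) * V) $$ (x, k) = (\<Sum>j\<in>J. ((complex_of_real (f (mu j)) \<cdot>\<^sub>m P j) * V) $$ (x, k))"
      unfolding proj_comb_def by (rule index_mat_sum_mult) (use proj_carrier V xk in auto)
    also have "\<dots> = (\<Sum>j\<in>J. complex_of_real (f (mu j)) * (P j * V) $$ (x, k))"
    proof (intro sum.cong refl)
      fix j assume "j \<in> J"
      then show "((complex_of_real (f (mu j)) \<cdot>\<^sub>m P j) * V) $$ (x, k) = complex_of_real (f (mu j)) * (P j * V) $$ (x, k)"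
        using proj_carrier[of j] V xk by (simp add: mult_smult_assoc_mat)
    qed
    also have "\<dots> = (\<Sum>j\<in>J. complex_of_real (f (nu k)) * (P j * V) $$ (x, k))"
      using proj_mult_eigenvector_entry[OF sd _ xk] by (intro sum.cong refl) (metis mult_zero_right)
    also have "\<dots> = complex_of_real (f (nu k)) * (mat_sum d P J * V) $$ (x, k)"
      by (subst index_mat_sum_mult) (use proj_carrier V xk in \<open>auto simp: sum_distrib_left\<close>)
    also have "\<dots> = (V * mat_diag d (\<lambda>i. complex_of_real (f (nu i)))) $$ (x, k)"
      using V xk by (simp add: proj_sum_one mat_diag_mult_right[of _ d d])
    finally show "(proj_comb (\<lambda>j. f (mu j)) * V) $$ (x, k) = (V * mat_diag d (\<lambda>i. complex_of_real (f (nu i)))) $$ (x, k)" .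
  qed (use V in auto)
  have "proj_comb (\<lambda>j. f (mu j)) = proj_comb (\<lambda>j. f (mu j)) * V * mat_adjoint V"
    using V by (simp add: assoc_mult_mat[of _ d d _ d _ d])
  then show ?thesis
    unfolding SV by simp
qed

lemma mat_fun_proj_comb: "mat_fun f (proj_comb a) = proj_comb (\<lambda>j. f (a j))"
proof -
  obtain U lam where "(SOME (U, lam). spectral_decomp (proj_comb a) U lam) = (U, lam)"
    by fastforce
  moreover have "\<exists>p. case p of (U, lam) \<Rightarrow> spectral_decomp (proj_comb a) U lam"
    using hermitian_spectral_decomp_exists[OF proj_comb_carrier proj_comb_hermitian] by auto
  ultimately have "spectral_decomp (proj_comb a) U lam"
    using someI_ex[where P = "\<lambda>(U, lam). spectral_decomp (proj_comb a) U lam"] by simp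
  then show ?thesis
    unfolding mat_fun_def \<open>(SOME (U, lam). _) = (U, lam)\<close>
    using spectral_decomp_proj_comb_fun by simp
qed

definition proj_rank :: "nat \<Rightarrow> real" where
  "proj_rank j = Re (mat_trace (P j))"

lemma mat_trace_proj: "j \<in> J \<Longrightarrow> mat_trace (P j) = complex_of_real (proj_rank j)"
  unfolding proj_rank_def
  using mat_trace_projection[OF proj_carrier proj_hermitian proj_idem] by simp

lemma proj_rank_pos: "j \<in> J \<Longrightarrow> proj_rank j > 0"
  unfolding proj_rank_def
  using mat_trace_projection[OF proj_carrier proj_hermitian proj_idem]
    sum_cmod_sq_entries_pos[OF proj_carrier proj_nonzero] by simp

lemma mat_trace_proj_comb_real:
  "mat_trace (proj_comb a) = complex_of_real (\<Sum>j\<in>J. a j * proj_rank j)"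
  unfolding mat_trace_proj_comb of_real_sum by (intro sum.cong) (simp_all add: mat_trace_proj)

lemma Re_mat_trace_proj_comb: "Re (mat_trace (proj_comb a)) = (\<Sum>j\<in>J. a j * proj_rank j)"
  unfolding mat_trace_proj_comb_real by simp

lemma sum_proj_rank_remove: "i \<in> J \<Longrightarrow> (\<Sum>j\<in>J - {i}. proj_rank j) = real d - proj_rank i"
  using Re_mat_trace_proj_comb[of "\<lambda>_. 1"] finite_index
  unfolding proj_comb_one mat_trace_def by (simp add: sum.remove)

lemma sum_weighted_proj_rank_le:
  assumes i: "i \<in> J" and w: "\<And>j. j \<in> J - {i} \<Longrightarrow> w j \<le> c"
  shows "(\<Sum>j\<in>J. w j * proj_rank j) \<le> w i * proj_rank i + c * (real d - proj_rank i)"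
proof -
  have "(\<Sum>j\<in>J. w j * proj_rank j) = w i * proj_rank i + (\<Sum>j\<in>J - {i}. w j * proj_rank j)"
    using i finite_index by (simp add: sum.remove)
  also have "(\<Sum>j\<in>J - {i}. w j * proj_rank j) \<le> (\<Sum>j\<in>J - {i}. c * proj_rank j)"
    using w proj_rank_pos by (intro sum_mono mult_right_mono) (auto intro: less_imp_le)
  also have "\<dots> = c * (real d - proj_rank i)"
    using sum_proj_rank_remove[OF i] by (simp add: sum_distrib_left[symmetric])
  finally show ?thesis
    by simp
qed

lemma proj_rank_less_dim:
  assumes i: "i \<in> J" and j: "j \<in> J" "j \<noteq> i"
  shows "proj_rank i < real d"
proof -
  have "proj_rank j \<le> (\<Sum>k\<in>J - {i}. proj_rank k)"
    using finite_index j proj_rank_pos by (intro member_le_sum) (auto intro: less_imp_le)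
  then show ?thesis
    using sum_proj_rank_remove[OF i] proj_rank_pos[OF j(1)] by linarith
qed

lemma normalize_proj_comb:
  "(1 / mat_trace (proj_comb a)) \<cdot>\<^sub>m proj_comb a = proj_comb (\<lambda>j. a j / (\<Sum>k\<in>J. a k * proj_rank k))"
  unfolding mat_trace_proj_comb_real
  using smult_proj_comb[of "1 / (\<Sum>k\<in>J. a k * proj_rank k)" a] by simp

lemma normalized_proj_eq_proj_comb:
  assumes i: "i \<in> J"
  shows "(1 / mat_trace (P i)) \<cdot>\<^sub>m P i = proj_comb (\<lambda>j. if j = i then 1 / proj_rank i else 0)"
proof -
  have "P i = proj_comb (\<lambda>j. if j = i then 1 else 0)"
  proof (rule eq_matI)
    fix x y assume "x < dim_row (proj_comb (\<lambda>j. if j = i then 1 else 0))"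
      "y < dim_col (proj_comb (\<lambda>j. if j = i then 1 else 0))"
    then have "proj_comb (\<lambda>j. if j = i then 1 else 0) $$ (x, y) = (\<Sum>j\<in>J. if j = i then P j $$ (x, y) else 0)"
      by (simp add: index_proj_comb) (intro sum.cong, auto)
    then show "P i $$ (x, y) = proj_comb (\<lambda>j. if j = i then 1 else 0) $$ (x, y)"
      using i finite_index by simp
  qed (use proj_carrier[OF i] in auto)
  also have "(1 / mat_trace (proj_comb (\<lambda>j. if j = i then 1 else 0))) \<cdot>\<^sub>m \<dots>
      = proj_comb (\<lambda>j. if j = i then 1 / proj_rank i else 0)"
  proof -
    have "(\<Sum>k\<in>J. (if k = i then 1 else 0) * proj_rank k) = (\<Sum>k\<in>J. if k = i then proj_rank k else 0)"
      by (intro sum.cong) auto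
    also have "\<dots> = proj_rank i"
      using i finite_index by simp
    finally show ?thesis
      unfolding normalize_proj_comb by (intro arg_cong[where f = proj_comb] ext) simp
  qed
  finally show ?thesis
    by simp
qed

lemma gibbs_state_proj_comb:
  "(1 / mat_trace (mat_fun exp (complex_of_real (- \<beta>) \<cdot>\<^sub>m proj_comb lam))) \<cdot>\<^sub>m
      mat_fun exp (complex_of_real (- \<beta>) \<cdot>\<^sub>m proj_comb lam)
    = proj_comb (\<lambda>j. exp (- \<beta> * lam j) / (\<Sum>k\<in>J. exp (- \<beta> * lam k) * proj_rank k))"
  unfolding smult_proj_comb mat_fun_proj_comb normalize_proj_comb by simp

lemma rel_entropy_proj_comb:
  "rel_entropy (proj_comb r) (proj_comb s) = (\<Sum>j\<in>J. r j * (ln_supp (r j) - ln_supp (s j)) * proj_rank j)"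
  unfolding rel_entropy_def mat_fun_proj_comb proj_comb_minus proj_comb_mult Re_mat_trace_proj_comb ..

lemma petz_renyi_proj_comb:
  "petz_renyi \<alpha> (proj_comb r) (proj_comb s) =
     1 / (\<alpha> - 1) * ln (\<Sum>j\<in>J. r j powr \<alpha> * s j powr (1 - \<alpha>) * proj_rank j)"
  unfolding petz_renyi_def mat_fun_proj_comb proj_comb_mult Re_mat_trace_proj_comb ..

lemma sandwiched_renyi_proj_comb:
  "sandwiched_renyi \<alpha> (proj_comb r) (proj_comb s) =
     1 / (\<alpha> - 1) * ln (\<Sum>j\<in>J. (s j powr ((1 - \<alpha>) / (2 * \<alpha>)) * r j * s j powr ((1 - \<alpha>) / (2 * \<alpha>))) powr \<alpha> * proj_rank j)"
  unfolding sandwiched_renyi_def Let_def mat_fun_proj_comb proj_comb_mult Re_mat_trace_proj_comb ..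

lemma geometric_renyi_proj_comb:
  "geometric_renyi \<alpha> (proj_comb r) (proj_comb s) =
     1 / (\<alpha> - 1) * ln (\<Sum>j\<in>J. s j * (s j powr (- 1 / 2) * r j * s j powr (- 1 / 2)) powr \<alpha> * proj_rank j)"
  unfolding geometric_renyi_def Let_def mat_fun_proj_comb proj_comb_mult Re_mat_trace_proj_comb ..

lemma rel_entropy_normalized_proj:
  assumes i: "i \<in> J" and s: "s i > 0"
  shows "rel_entropy (proj_comb (\<lambda>j. if j = i then 1 / proj_rank i else 0)) (proj_comb s) = - ln (proj_rank i * s i)"
  unfolding rel_entropy_proj_comb using proj_rank_pos[OF i] s
  by (subst sum_eq_single[OF finite_index i]) (auto simp: ln_supp_def ln_div ln_mult)

lemma petz_renyi_normalized_proj: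
  assumes i: "i \<in> J" and s: "s i > 0" and \<alpha>: "\<alpha> \<noteq> 1"
  shows "petz_renyi \<alpha> (proj_comb (\<lambda>j. if j = i then 1 / proj_rank i else 0)) (proj_comb s) = - ln (proj_rank i * s i)"
proof -
  have g: "proj_rank i > 0"
    by (rule proj_rank_pos[OF i])
  have "(\<Sum>j\<in>J. (if j = i then 1 / proj_rank i else 0) powr \<alpha> * s j powr (1 - \<alpha>) * proj_rank j)
      = (1 / proj_rank i) powr \<alpha> * s i powr (1 - \<alpha>) * proj_rank i"
    by (subst sum_eq_single[OF finite_index i]) auto
  moreover have "ln ((1 / proj_rank i) powr \<alpha> * s i powr (1 - \<alpha>) * proj_rank i) = (1 - \<alpha>) * ln (proj_rank i * s i)"
    using g s by (simp add: ln_mult ln_powr ln_div algebra_simps)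
  ultimately show ?thesis
    unfolding petz_renyi_proj_comb using renyi_exponent_cancel[OF \<alpha>] by simp
qed

lemma sandwiched_renyi_normalized_proj:
  assumes i: "i \<in> J" and s: "s i > 0" and \<alpha>: "\<alpha> > 0" "\<alpha> \<noteq> 1"
  shows "sandwiched_renyi \<alpha> (proj_comb (\<lambda>j. if j = i then 1 / proj_rank i else 0)) (proj_comb s) = - ln (proj_rank i * s i)"
proof -
  define c where "c = (1 - \<alpha>) / (2 * \<alpha>)"
  have g: "proj_rank i > 0"
    by (rule proj_rank_pos[OF i])
  have "(\<Sum>j\<in>J. (s j powr c * (if j = i then 1 / proj_rank i else 0) * s j powr c) powr \<alpha> * proj_rank j)
      = (s i powr c * (1 / proj_rank i) * s i powr c) powr \<alpha> * proj_rank i"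
    by (subst sum_eq_single[OF finite_index i]) auto
  moreover have "ln ((s i powr c * (1 / proj_rank i) * s i powr c) powr \<alpha> * proj_rank i)
      = (2 * \<alpha> * c) * ln (s i) + (1 - \<alpha>) * ln (proj_rank i)"
    using g s by (simp add: ln_mult ln_powr ln_div algebra_simps)
  moreover have "2 * \<alpha> * c = 1 - \<alpha>"
    unfolding c_def using \<alpha> by simp
  ultimately show ?thesis
    unfolding sandwiched_renyi_proj_comb c_def[symmetric] using g s renyi_exponent_cancel[OF \<alpha>(2)]
    by (simp add: ln_mult distrib_left)
qed

lemma geometric_renyi_normalized_proj:
  assumes i: "i \<in> J" and s: "s i > 0" and \<alpha>: "\<alpha> \<noteq> 1"
  shows "geometric_renyi \<alpha> (proj_comb (\<lambda>j. if j = i then 1 / proj_rank i else 0)) (proj_comb s) = - ln (proj_rank i * s i)"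
proof -
  have g: "proj_rank i > 0"
    by (rule proj_rank_pos[OF i])
  have "(\<Sum>j\<in>J. s j * (s j powr (- 1 / 2) * (if j = i then 1 / proj_rank i else 0) * s j powr (- 1 / 2)) powr \<alpha> * proj_rank j)
      = s i * (s i powr (- 1 / 2) * (1 / proj_rank i) * s i powr (- 1 / 2)) powr \<alpha> * proj_rank i"
    by (subst sum_eq_single[OF finite_index i]) auto
  moreover have "ln (s i * (s i powr (- 1 / 2) * (1 / proj_rank i) * s i powr (- 1 / 2)) powr \<alpha> * proj_rank i)
      = (1 - \<alpha>) * ln (proj_rank i * s i)"
    using g s by (simp add: ln_mult ln_powr ln_div algebra_simps)
  ultimately show ?thesis
    unfolding geometric_renyi_proj_comb using renyi_exponent_cancel[OF \<alpha>] by simp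
qed

end

(* \<beta> is chosen so that e^{-\<beta> (l2 - l1)} D = g (e^\<epsilon> - 1). *)
lemma ground_weight_bound:
  fixes g D Z l1 l2 \<beta> \<epsilon> :: real
  assumes g: "g > 0" and D: "D > 0" and \<epsilon>: "\<epsilon> > 0" and l: "l1 < l2"
    and \<beta>: "\<beta> = 1 / (l2 - l1) * ln (1 / (exp \<epsilon> - 1) * (D / g))"
    and Z: "Z > 0" "Z \<le> exp (- \<beta> * l1) * g + exp (- \<beta> * l2) * D"
  shows "- ln (g * (exp (- \<beta> * l1) / Z)) \<le> \<epsilon>"
proof -
  define X where "X = 1 / (exp \<epsilon> - 1) * (D / g)"
  have e1: "exp \<epsilon> - 1 > 0"
    using \<epsilon> by simp
  have X: "X > 0"
    unfolding X_def using e1 g D by simp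
  have "exp (- \<beta> * l2) = exp (- \<beta> * l1) * exp (- (\<beta> * (l2 - l1)))"
    by (simp add: mult_exp_exp algebra_simps)
  also have "\<beta> * (l2 - l1) = ln X"
    unfolding \<beta> X_def[symmetric] using l by simp
  finally have "exp (- \<beta> * l2) * D = exp (- \<beta> * l1) * (D / X)"
    using X by (simp add: exp_minus field_simps)
  also have "D / X = g * (exp \<epsilon> - 1)"
    unfolding X_def using e1 g D by (simp add: field_simps)
  finally have "Z \<le> exp (- \<beta> * l1) * g * exp \<epsilon>"
    using Z(2) by (simp add: algebra_simps)
  then have "ln Z \<le> ln (exp (- \<beta> * l1) * g * exp \<epsilon>)"
    using Z(1) by simp
  also have "\<dots> = - \<beta> * l1 + ln g + \<epsilon>"
    using g by (simp add: ln_mult)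
  finally show ?thesis
    using Z(1) g by (simp add: ln_mult ln_div)
qed

theorem corollary3:
  fixes d M :: nat and H :: "complex mat" and lam :: "nat \<Rightarrow> real"
    and P :: "nat \<Rightarrow> complex mat" and \<epsilon> \<beta> :: real
  assumes H: "H \<in> carrier_mat d d" "hermitian_mat H"
    and M: "M \<ge> 2"
    and lam_mono: "strict_mono_on {1..M} lam"
    and P_proj: "\<forall>i\<in>{1..M}. P i \<in> carrier_mat d d \<and> hermitian_mat (P i)
                   \<and> P i * P i = P i \<and> P i \<noteq> 0\<^sub>m d d"
    and P_orth: "\<forall>i\<in>{1..M}. \<forall>j\<in>{1..M}. i \<noteq> j \<longrightarrow> P i * P j = 0\<^sub>m d d"
    and P_complete: "mat_sum d P {1..M} = 1\<^sub>m d"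
    and H_decomp: "H = mat_sum d (\<lambda>i. complex_of_real (lam i) \<cdot>\<^sub>m P i) {1..M}"
    and eps: "\<epsilon> > 0"
    and beta_def: "\<beta> = 1 / (lam 2 - lam 1) *
        ln ((1 / (exp \<epsilon> - 1)) * ((real d - Re (mat_trace (P 1))) / Re (mat_trace (P 1))))"
    and beta_nonneg: "\<beta> \<ge> 0"
  shows "let \<rho> = (1 / mat_trace (P 1)) \<cdot>\<^sub>m P 1;
             E = mat_fun exp (complex_of_real (- \<beta>) \<cdot>\<^sub>m H);
             \<sigma> = (1 / mat_trace E) \<cdot>\<^sub>m E
         in rel_entropy \<rho> \<sigma> \<le> \<epsilon>
            \<and> (\<forall>\<alpha>::real. \<alpha> > 0 \<and> \<alpha> \<noteq> 1 \<longrightarrow>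
                 petz_renyi \<alpha> \<rho> \<sigma> \<le> \<epsilon>
               \<and> sandwiched_renyi \<alpha> \<rho> \<sigma> \<le> \<epsilon>
               \<and> geometric_renyi \<alpha> \<rho> \<sigma> \<le> \<epsilon>)"
proof -
  interpret resolution_of_identity d "{1..M}" P
    using P_proj P_orth P_complete by unfold_locales (auto simp: hermitian_mat_def)
  have J: "1 \<in> {1..M}" "2 \<in> {1..M}"
    using M by auto
  define Z where "Z = (\<Sum>j\<in>{1..M}. exp (- \<beta> * lam j) * proj_rank j)"
  have "exp (- \<beta> * lam j) \<le> exp (- \<beta> * lam 2)" if "j \<in> {1..M} - {1}" for j
    using that beta_nonneg strict_mono_on_leD[OF lam_mono J(2)] by (simp add: mult_left_mono)
  then have "Z \<le> exp (- \<beta> * lam 1) * proj_rank 1 + exp (- \<beta> * lam 2) * (real d - proj_rank 1)"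
    unfolding Z_def by (rule sum_weighted_proj_rank_le[OF J(1)])
  moreover have "Z > 0"
    unfolding Z_def using J(1) proj_rank_pos by (intro sum_pos) auto
  moreover have "lam 1 < lam 2"
    using strict_mono_onD[OF lam_mono J] by simp
  ultimately have bound: "- ln (proj_rank 1 * (exp (- \<beta> * lam 1) / Z)) \<le> \<epsilon>"
    using proj_rank_pos[OF J(1)] proj_rank_less_dim[OF J(1,2)] eps
    by (intro ground_weight_bound[where \<beta> = \<beta>]) (simp_all add: beta_def proj_rank_def)
  note divergences = rel_entropy_normalized_proj petz_renyi_normalized_proj
    sandwiched_renyi_normalized_proj geometric_renyi_normalized_proj
  show ?thesis
    unfolding Let_def H_decomp proj_comb_def[symmetric] gibbs_state_proj_comb Z_def[symmetric]
      normalized_proj_eq_proj_comb[OF J(1)]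
    using divergences[of 1 "\<lambda>j. exp (- \<beta> * lam j) / Z"] bound J(1) \<open>Z > 0\<close> by auto
qed

end
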